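(* For every $n\ge 3$, $\chi'_{qm\Sigma}(K_n)=3$.
   Context: A $k$-edge-coloring of $G$ is any map $c:E(G)\to\{1,\dots,k\}$ (adjacent edges may share colors). It induces $\sigma_c(v)=\sum_{u\in N(v)}c(vu)$. The coloring is neighbor sum distinguishing (NSD) if $\sigma_c(u)\ne\sigma_c(v)$ for every edge $uv$. It is quasi-majority if every vertex $v$ is incident to at most $\lceil d(v)/2\rceil$ edges of each single color. $\chi'_{qm\Sigma}(G)$ denotes the least $k$ such that $G$ has a $k$-edge-coloring that is both quasi-majority and NSD. *)

theory Defs
  imports Main
begin

text \<open>A simple graph is represented by its edge set E, a set of 2-element vertex sets.\<close>

definition is_k_edge_coloring :: "nat \<Rightarrow> 'a set set \<Rightarrow> ('a set \<Rightarrow> nat) \<Rightarrow> bool" where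
  "is_k_edge_coloring k E c \<longleftrightarrow> (\<forall>e\<in>E. c e \<in> {1..k})"

definition incident_edges :: "'a set set \<Rightarrow> 'a \<Rightarrow> 'a set set" where
  "incident_edges E v = {e\<in>E. v \<in> e}"

definition degree :: "'a set set \<Rightarrow> 'a \<Rightarrow> nat" where
  "degree E v = card (incident_edges E v)"

definition sigma :: "'a set set \<Rightarrow> ('a set \<Rightarrow> nat) \<Rightarrow> 'a \<Rightarrow> nat" where
  "sigma E c v = (\<Sum>e\<in>incident_edges E v. c e)"

definition nsd :: "'a set set \<Rightarrow> ('a set \<Rightarrow> nat) \<Rightarrow> bool" where
  "nsd E c \<longleftrightarrow> (\<forall>u v. {u, v} \<in> E \<longrightarrow> sigma E c u \<noteq> sigma E c v)"

definition quasi_majority :: "'a set set \<Rightarrow> ('a set \<Rightarrow> nat) \<Rightarrow> bool" where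
  "quasi_majority E c \<longleftrightarrow>
     (\<forall>v i. card {e \<in> incident_edges E v. c e = i} \<le> (degree E v + 1) div 2)"

definition chi_qm_sigma :: "'a set set \<Rightarrow> nat" where
  "chi_qm_sigma E = (LEAST k. \<exists>c. is_k_edge_coloring k E c \<and> quasi_majority E c \<and> nsd E c)"

definition complete_graph :: "nat \<Rightarrow> nat set set" where
  "complete_graph n = {{u, v} | u v. u < n \<and> v < n \<and> u \<noteq> v}"

end

theory Submission
  imports Defs
begin

text \<open>With only the colours 1 and 2, a vertex of degree d has sigma = d + (number of its edges
  of colour 2), and quasi-majority forces that number to be floor(d/2) or ceil(d/2). In K_n all
  degrees are n - 1, so sigma takes at most two values on n pairwise adjacent vertices.

  For n = 2h + 1 colour the edge uv by u + v: colour 2 if u + v is even, otherwise 1 or 3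
  according as u + v < n or not. The edges at v realise the window of sums v, ..., v + n - 1
  except the even sum 2v; counting colours in this window gives at most h edges of each colour
  at v and sigma(v) = 3h + v.

  For n = 2h + 2 colour K_(2h+1) in this way and join an apex 2h + 1 to 0, ..., 2h with colours
  1 (h times), 2, 2, 3 (h - 1 times). Then sigma(v) = 3h + v + c(v, apex) increases strictly
  on v < 2h + 1 and never equals sigma(apex) = 4h + 1.\<close>

lemma card_less_Suc_filter:
  "card {k. k < Suc a \<and> P k} = card {k. k < a \<and> P k} + of_bool (P a)"
proof -
  have "{k. k < Suc a \<and> P k} = {k. k < a \<and> P k} \<union> {k. k = a \<and> P k}"
    by auto
  then show ?thesis by (auto simp: Collect_conv_if)
qed

lemma card_even_lessThan: "card {k\<in>{..<a}. even k} = (a + 1) div 2"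
  by (induction a) (auto simp: card_less_Suc_filter)

lemma card_odd_lessThan: "card {k\<in>{..<a}. odd k} = a div 2"
  by (induction a) (auto simp: card_less_Suc_filter)

lemma card_lessThan_add_filter:
  "card {k\<in>{..<a + b}. P k} = card {k\<in>{..<a::nat}. P k} + card {j\<in>{..<b}. P (a + j)}"
  by (induction b) (simp_all add: card_less_Suc_filter)

lemma card_window_filter:
  fixes v n :: nat
  assumes "v < n"
  shows "card {j\<in>{..<n} - {v}. P (v + j)} + of_bool (P (2 * v)) + card {k\<in>{..<v}. P k}
    = card {k\<in>{..<v + n}. P k}"
proof -
  have "{j\<in>{..<n}. P (v + j)}
      = {j\<in>{..<n} - {v}. P (v + j)} \<union> {j. j = v \<and> P (v + j)}"
    using assms by auto
  then have "card {j\<in>{..<n}. P (v + j)}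
      = card {j\<in>{..<n} - {v}. P (v + j)} + of_bool (P (2 * v))"
    by (auto simp: Collect_conv_if mult_2)
  then show ?thesis
    using card_lessThan_add_filter[where P = P and a = v and b = n] by simp
qed

lemma sum_eq_color_counts:
  fixes f :: "'a \<Rightarrow> nat"
  assumes "finite A" and "\<And>a. a \<in> A \<Longrightarrow> f a \<in> {1, 2, 3}"
  shows "(\<Sum>a\<in>A. f a)
    = card {a\<in>A. f a = 1} + 2 * card {a\<in>A. f a = 2} + 3 * card {a\<in>A. f a = 3}"
proof -
  have "(\<Sum>a\<in>A. f a)
      = (\<Sum>a\<in>A. of_bool (f a = 1) + 2 * of_bool (f a = 2) + 3 * of_bool (f a = 3))"
    using assms(2) by (intro sum.cong) auto
  also have "\<dots>
      = card {a\<in>A. f a = 1} + 2 * card {a\<in>A. f a = 2} + 3 * card {a\<in>A. f a = 3}"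
    using assms(1) by (simp add: sum.distrib sum_distrib_left[symmetric] sum_of_bool_eq Int_def)
  finally show ?thesis .
qed

lemma doubleton_mem_complete_graph_iff:
  "{u, v} \<in> complete_graph n \<longleftrightarrow> u < n \<and> v < n \<and> u \<noteq> v"
  unfolding complete_graph_def by (auto simp: doubleton_eq_iff)

lemma incident_edges_complete_graph:
  "incident_edges (complete_graph n) v
    = (if v < n then (\<lambda>j. {v, j}) ` ({..<n} - {v}) else {})"
  unfolding incident_edges_def complete_graph_def by auto

lemma inj_doubleton: "inj (\<lambda>j. {v, j})"
  by (auto simp: inj_def doubleton_eq_iff)

lemma degree_complete_graph: "v < n \<Longrightarrow> degree (complete_graph n) v = n - 1"
  unfolding degree_def incident_edges_complete_graph
  by (simp add: card_image inj_on_subset[OF inj_doubleton])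

lemma sigma_complete_graph:
  "v < n \<Longrightarrow> sigma (complete_graph n) c v = (\<Sum>j\<in>{..<n} - {v}. c {v, j})"
  unfolding sigma_def incident_edges_complete_graph
  by (simp add: sum.reindex inj_on_subset[OF inj_doubleton])

lemma quasi_majority_complete_graphI:
  assumes "\<And>v i. v < n \<Longrightarrow> card {j\<in>{..<n} - {v}. c {v, j} = i} \<le> n div 2"
  shows "quasi_majority (complete_graph n) c"
  unfolding quasi_majority_def
proof (intro allI)
  fix v i
  show "card {e\<in>incident_edges (complete_graph n) v. c e = i}
      \<le> (degree (complete_graph n) v + 1) div 2"
  proof (cases "v < n")
    case True
    then have "{e\<in>incident_edges (complete_graph n) v. c e = i}
        = (\<lambda>j. {v, j}) ` {j\<in>{..<n} - {v}. c {v, j} = i}"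
      by (auto simp: incident_edges_complete_graph)
    then show ?thesis
      using True assms[OF True, of i]
      by (simp add: card_image inj_on_subset[OF inj_doubleton] degree_complete_graph)
  qed (simp add: incident_edges_complete_graph)
qed

lemma nsd_complete_graph_iff:
  "nsd (complete_graph n) c \<longleftrightarrow> inj_on (sigma (complete_graph n) c) {..<n}"
proof -
  have "nsd (complete_graph n) c
      \<longleftrightarrow> (\<forall>u v. u < n \<and> v < n \<and> u \<noteq> v
            \<longrightarrow> sigma (complete_graph n) c u \<noteq> sigma (complete_graph n) c v)"
    unfolding nsd_def doubleton_mem_complete_graph_iff ..
  then show ?thesis
    unfolding inj_on_def by blast
qed

lemma sigma_quasi_majority_two_colors:
  assumes fin: "finite (incident_edges E v)"
    and two: "\<And>e. e \<in> incident_edges E v \<Longrightarrow> c e \<in> {1, 2}"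
    and qm: "quasi_majority E c"
  shows "sigma E c v \<in> {degree E v + degree E v div 2, degree E v + (degree E v + 1) div 2}"
proof -
  define I where "I = incident_edges E v"
  define d where "d = degree E v"
  have d_card: "d = card I"
    unfolding d_def I_def degree_def ..
  have partition: "I = {e\<in>I. c e = 1} \<union> {e\<in>I. c e = 2}"
    using two unfolding I_def by auto
  have "card {e\<in>I. c e = 1} + card {e\<in>I. c e = 2}
      = card ({e\<in>I. c e = 1} \<union> {e\<in>I. c e = 2})"
    using fin unfolding I_def by (intro card_Un_disjoint[symmetric]) auto
  then have card_I: "d = card {e\<in>I. c e = 1} + card {e\<in>I. c e = 2}"
    unfolding d_card by (simp only: partition[symmetric])
  have sigma_eq: "sigma E c v = card {e\<in>I. c e = 1} + 2 * card {e\<in>I. c e = 2}"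
  proof -
    have "{e\<in>I. c e = 3} = {}"
      using two unfolding I_def by fastforce
    then show ?thesis
      using sum_eq_color_counts[of I c] fin two unfolding sigma_def I_def by auto
  qed
  have bound: "card {e\<in>I. c e = i} \<le> (d + 1) div 2" for i
    using qm unfolding quasi_majority_def I_def d_def by blast
  show ?thesis
    unfolding d_def[symmetric] insert_iff empty_iff
    using card_I sigma_eq bound[of 1] bound[of 2] by presburger
qed

lemma three_le_qm_nsd_colors_complete_graph:
  assumes "n \<ge> 3" and col: "is_k_edge_coloring k (complete_graph n) c"
    and qm: "quasi_majority (complete_graph n) c" and nsd: "nsd (complete_graph n) c"
  shows "3 \<le> k"
proof (rule ccontr)
  assume "\<not> 3 \<le> k"
  let ?d = "n - 1"
  let ?S = "{?d + ?d div 2, ?d + (?d + 1) div 2}"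
  have in_S: "sigma (complete_graph n) c v \<in> ?S" if "v < n" for v
  proof -
    have two: "c e \<in> {1, 2}" if "e \<in> incident_edges (complete_graph n) v" for e
      using col that \<open>\<not> 3 \<le> k\<close>
      unfolding is_k_edge_coloring_def incident_edges_def by auto
    have "finite (incident_edges (complete_graph n) v)"
      by (simp add: incident_edges_complete_graph)
    from sigma_quasi_majority_two_colors[OF this two qm] show ?thesis
      by (simp only: degree_complete_graph[OF \<open>v < n\<close>])
  qed
  then have "sigma (complete_graph n) c ` {..<n} \<subseteq> ?S"
    by blast
  then have "card {..<n} \<le> card ?S"
    using nsd unfolding nsd_complete_graph_iff by (intro card_inj_on_le) auto
  also have "\<dots> \<le> 2"
    by (simp add: card_insert_if)
  finally show False
    using \<open>n \<ge> 3\<close> by simp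
qed

definition sum_color :: "nat \<Rightarrow> nat \<Rightarrow> nat" where
  "sum_color n s = (if even s then 2 else if s < n then 1 else 3)"

lemma sum_color_range: "sum_color n s \<in> {1, 2, 3}"
  by (simp add: sum_color_def)

lemma card_sum_color_lessThan:
  assumes "odd n"
  shows "card {k\<in>{..<a}. sum_color n k = x}
    = (if x = 1 then min a n div 2 else if x = 2 then (a + 1) div 2
       else if x = 3 then (a + 1 - n) div 2 else 0)"
proof -
  have "{k\<in>{..<a}. sum_color n k = 1} = {k\<in>{..<min a n}. odd k}"
    by (auto simp: sum_color_def)
  then have one: "card {k\<in>{..<a}. sum_color n k = 1} = min a n div 2"
    by (simp only: card_odd_lessThan)
  have "{k\<in>{..<a}. sum_color n k = 2} = {k\<in>{..<a}. even k}"
    by (auto simp: sum_color_def)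
  then have two: "card {k\<in>{..<a}. sum_color n k = 2} = (a + 1) div 2"
    by (simp only: card_even_lessThan)
  have three: "card {k\<in>{..<a}. sum_color n k = 3} = (a + 1 - n) div 2"
  proof (cases "a \<le> n")
    case True
    then have "{k\<in>{..<a}. sum_color n k = 3} = {}"
      by (auto simp: sum_color_def)
    then show ?thesis
      using True by simp
  next
    case False
    have "card {k\<in>{..<n + (a - n)}. sum_color n k = 3}
        = card {k\<in>{..<n}. sum_color n k = 3} + card {j\<in>{..<a - n}. sum_color n (n + j) = 3}"
      by (rule card_lessThan_add_filter)
    also have "\<dots> = card {j\<in>{..<a - n}. even j}"
      using assms by (auto simp: sum_color_def intro!: arg_cong[where f = card])
    also have "\<dots> = (a + 1 - n) div 2"
      using False by (simp only: card_even_lessThan)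
    finally show ?thesis
      using False by simp
  qed
  have "{k\<in>{..<a}. sum_color n k = x} = {}" if "x \<notin> {1, 2, 3}"
    using that by (auto simp: sum_color_def)
  then show ?thesis
    using one two three by (cases "x = 1"; cases "x = 2"; cases "x = 3") simp_all
qed

lemma card_sum_color_row:
  assumes "v < 2 * h + 1"
  shows "card {j\<in>{..<2 * h + 1} - {v}. sum_color (2 * h + 1) (v + j) = x}
    = (if x = 1 then h - v div 2 else if x = 2 then h - v mod 2
       else if x = 3 then (v + 1) div 2 else 0)"
    (is "?r = _")
proof -
  have "sum_color (2 * h + 1) (2 * v) = 2"
    by (simp add: sum_color_def)
  then have window: "?r + of_bool (x = 2) + card {k\<in>{..<v}. sum_color (2 * h + 1) k = x}
      = card {k\<in>{..<v + (2 * h + 1)}. sum_color (2 * h + 1) k = x}"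
    using card_window_filter[OF assms, of "\<lambda>k. sum_color (2 * h + 1) k = x"] by simp
  have "odd (2 * h + 1)"
    by simp
  note window = window[unfolded card_sum_color_lessThan[OF this]]
  consider "x = 1" | "x = 2" | "x = 3" | "x \<notin> {1, 2, 3}"
    by blast
  then show ?thesis
  proof cases
    case 1
    then show ?thesis
      using window assms by simp
  next
    case 2
    have "(v + 1) div 2 = v div 2 + v mod 2"
      by presburger
    then show ?thesis
      using 2 window by simp
  next
    case 3
    then show ?thesis
      using window assms by simp
  next
    case 4
    then show ?thesis
      using window by auto
  qed
qed

lemma card_sum_color_row_le:
  assumes "v < 2 * h + 1"
  shows "card {j\<in>{..<2 * h + 1} - {v}. sum_color (2 * h + 1) (v + j) = x} \<le> h"
  unfolding card_sum_color_row[OF assms] using assms by auto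

lemma sum_sum_color_row:
  assumes "v < 2 * h + 1"
  shows "(\<Sum>j\<in>{..<2 * h + 1} - {v}. sum_color (2 * h + 1) (v + j)) = 3 * h + v"
proof -
  let ?count = "\<lambda>x. card {j\<in>{..<2 * h + 1} - {v}. sum_color (2 * h + 1) (v + j) = x}"
  have "(\<Sum>j\<in>{..<2 * h + 1} - {v}. sum_color (2 * h + 1) (v + j))
      = ?count 1 + 2 * ?count 2 + 3 * ?count 3"
    using sum_color_range by (intro sum_eq_color_counts) auto
  also have "\<dots> = (h - v div 2) + 2 * (h - v mod 2) + 3 * ((v + 1) div 2)"
    by (simp only: card_sum_color_row[OF assms]) simp
  also have "\<dots> = 3 * h + v"
    using assms by (cases "even v") (auto elim!: evenE oddE)
  finally show ?thesis .
qed

text \<open>Edges are coloured through the sum of their endpoints, \<open>\<Sum>{u, v} = u + v\<close>; at the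
  apex \<open>2 * h + 1\<close> of \<open>even_coloring h\<close> this sum minus the apex is the other endpoint.\<close>

definition odd_coloring :: "nat \<Rightarrow> nat set \<Rightarrow> nat" where
  "odd_coloring h e = sum_color (2 * h + 1) (\<Sum>e)"

lemma odd_coloring_doubleton:
  "j \<noteq> v \<Longrightarrow> odd_coloring h {v, j} = sum_color (2 * h + 1) (v + j)"
  by (simp add: odd_coloring_def)

lemma odd_coloring_qm_nsd:
  fixes h :: nat
  defines "K \<equiv> complete_graph (2 * h + 1)"
  shows "is_k_edge_coloring 3 K (odd_coloring h) \<and> quasi_majority K (odd_coloring h)
    \<and> nsd K (odd_coloring h)"
proof (intro conjI)
  show "is_k_edge_coloring 3 K (odd_coloring h)"
    by (simp add: is_k_edge_coloring_def odd_coloring_def sum_color_def)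
  show "quasi_majority K (odd_coloring h)"
    unfolding K_def
  proof (rule quasi_majority_complete_graphI)
    fix v i
    assume "v < 2 * h + 1"
    moreover have "{j\<in>{..<2 * h + 1} - {v}. odd_coloring h {v, j} = i}
        = {j\<in>{..<2 * h + 1} - {v}. sum_color (2 * h + 1) (v + j) = i}"
      by (auto simp: odd_coloring_doubleton)
    ultimately show "card {j\<in>{..<2 * h + 1} - {v}. odd_coloring h {v, j} = i}
        \<le> (2 * h + 1) div 2"
      using card_sum_color_row_le by simp
  qed
  have "sigma K (odd_coloring h) v = 3 * h + v" if "v < 2 * h + 1" for v
    unfolding K_def sigma_complete_graph[OF that] sum_sum_color_row[OF that, symmetric]
    by (intro sum.cong) (auto simp: odd_coloring_doubleton)
  then show "nsd K (odd_coloring h)"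
    unfolding K_def nsd_complete_graph_iff by (simp add: inj_on_def)
qed

definition apex_color :: "nat \<Rightarrow> nat \<Rightarrow> nat" where
  "apex_color h j = (if j < h then 1 else if j \<le> h + 1 then 2 else 3)"

definition even_coloring :: "nat \<Rightarrow> nat set \<Rightarrow> nat" where
  "even_coloring h e =
    (if 2 * h + 1 \<in> e then apex_color h (\<Sum>e - (2 * h + 1)) else odd_coloring h e)"

lemma card_apex_color:
  assumes "h \<ge> 1"
  shows "card {j\<in>{..<2 * h + 1}. apex_color h j = x}
    = (if x = 1 then h else if x = 2 then 2 else if x = 3 then h - 1 else 0)"
proof -
  have "{j\<in>{..<2 * h + 1}. apex_color h j = x}
      = (if x = 1 then {..<h} else if x = 2 then {h, h + 1} else if x = 3 then {h + 2..<2 * h + 1}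
         else {})"
    using assms by (auto simp: apex_color_def)
  then show ?thesis
    by simp
qed

lemma sum_apex_color:
  assumes "h \<ge> 1"
  shows "(\<Sum>j<2 * h + 1. apex_color h j) = 4 * h + 1"
proof -
  let ?count = "\<lambda>x. card {j\<in>{..<2 * h + 1}. apex_color h j = x}"
  have "(\<Sum>j<2 * h + 1. apex_color h j) = ?count 1 + 2 * ?count 2 + 3 * ?count 3"
    by (rule sum_eq_color_counts) (auto simp: apex_color_def)
  also have "\<dots> = 4 * h + 1"
    using assms by (simp only: card_apex_color[OF assms]) simp
  finally show ?thesis .
qed

lemma even_coloring_doubleton:
  assumes "v < 2 * h + 1" and "j \<noteq> v"
  shows "even_coloring h {v, j}
    = (if j = 2 * h + 1 then apex_color h v else sum_color (2 * h + 1) (v + j))"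
  using assms by (auto simp: even_coloring_def odd_coloring_doubleton)

lemma even_coloring_apex:
  "m = 2 * h + 1 \<Longrightarrow> j < m \<Longrightarrow> even_coloring h {m, j} = apex_color h j"
  by (simp add: even_coloring_def)

lemma card_even_coloring_row_le:
  assumes "h \<ge> 1" and "v < 2 * h + 2"
  shows "card {j\<in>{..<2 * h + 2} - {v}. even_coloring h {v, j} = i} \<le> h + 1"
proof (cases "v < 2 * h + 1")
  case True
  let ?A = "{j\<in>{..<2 * h + 1} - {v}. sum_color (2 * h + 1) (v + j) = i}"
  have "{j\<in>{..<2 * h + 2} - {v}. even_coloring h {v, j} = i} \<subseteq> insert (2 * h + 1) ?A"
  proof
    fix j
    assume j: "j \<in> {j\<in>{..<2 * h + 2} - {v}. even_coloring h {v, j} = i}"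
    show "j \<in> insert (2 * h + 1) ?A"
    proof (cases "j = 2 * h + 1")
      case False
      with j show ?thesis
        using even_coloring_doubleton[OF True, of j] by auto
    qed simp
  qed
  then have "card {j\<in>{..<2 * h + 2} - {v}. even_coloring h {v, j} = i}
      \<le> card (insert (2 * h + 1) ?A)"
    by (intro card_mono) auto
  also have "\<dots> \<le> card ?A + 1"
    by (simp add: card_insert_if)
  finally show ?thesis
    using card_sum_color_row_le[OF True, of i] by simp
next
  case False
  with assms(2) have "v = 2 * h + 1"
    by simp
  then have apex_row: "{j\<in>{..<2 * h + 2} - {v}. even_coloring h {v, j} = i}
      = {j\<in>{..<2 * h + 1}. apex_color h j = i}"
    by (auto simp: even_coloring_apex)
  show ?thesis
    unfolding apex_row card_apex_color[OF assms(1)] using assms(1) by auto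
qed

lemma sigma_even_coloring:
  assumes "h \<ge> 1" and "v < 2 * h + 2"
  shows "sigma (complete_graph (2 * h + 2)) (even_coloring h) v
    = (if v < 2 * h + 1 then 3 * h + v + apex_color h v else 4 * h + 1)"
proof (cases "v < 2 * h + 1")
  case True
  then have row: "{..<2 * h + 2} - {v} = insert (2 * h + 1) ({..<2 * h + 1} - {v})"
    by auto
  have "sigma (complete_graph (2 * h + 2)) (even_coloring h) v
      = even_coloring h {v, 2 * h + 1} + (\<Sum>j\<in>{..<2 * h + 1} - {v}. even_coloring h {v, j})"
    unfolding sigma_complete_graph[OF assms(2)] row by simp
  also have "\<dots>
      = apex_color h v + (\<Sum>j\<in>{..<2 * h + 1} - {v}. sum_color (2 * h + 1) (v + j))"
    using True by (simp add: even_coloring_doubleton)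
  finally show ?thesis
    using True sum_sum_color_row[OF True] by simp
next
  case False
  with assms(2) have "v = 2 * h + 1"
    by simp
  moreover have "{..<2 * h + 2} - {2 * h + 1} = {..<2 * h + 1}"
    by auto
  ultimately have "sigma (complete_graph (2 * h + 2)) (even_coloring h) v
      = (\<Sum>j<2 * h + 1. even_coloring h {2 * h + 1, j})"
    unfolding sigma_complete_graph[OF assms(2)] by (simp only:)
  also have "\<dots> = (\<Sum>j<2 * h + 1. apex_color h j)"
    by (intro sum.cong) (simp_all add: even_coloring_apex)
  finally show ?thesis
    using False sum_apex_color[OF assms(1)] by simp
qed

lemma mono_apex_color: "mono (apex_color h)"
  by (auto simp: mono_def apex_color_def)

lemma inj_on_sigma_even_coloring:
  assumes "h \<ge> 1"
  shows "inj_on (sigma (complete_graph (2 * h + 2)) (even_coloring h)) {..<2 * h + 2}"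
proof -
  define s where "s v = (if v < 2 * h + 1 then 3 * h + v + apex_color h v else 4 * h + 1)" for v
  have below_apex: "s u < s v" if "u < v" "v < 2 * h + 1" for u v
  proof -
    have "apex_color h u \<le> apex_color h v"
      using that by (intro monoD[OF mono_apex_color]) simp
    then show ?thesis
      using that by (simp add: s_def)
  qed
  have ne_apex: "s u \<noteq> s (2 * h + 1)" if "u < 2 * h + 1" for u
    using that by (auto simp: s_def apex_color_def)
  have "s u \<noteq> s v" if "u < v" "v < 2 * h + 2" for u v
  proof (cases "v < 2 * h + 1")
    case True
    then show ?thesis
      using below_apex[OF that(1) True] by simp
  next
    case False
    with that have "v = 2 * h + 1"
      by simp
    then show ?thesis
      using ne_apex[of u] that(1) by simp
  qed
  then have "inj_on s {..<2 * h + 2}"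
    unfolding inj_on_def by (metis lessThan_iff linorder_neqE_nat)
  moreover have "inj_on (sigma (complete_graph (2 * h + 2)) (even_coloring h)) {..<2 * h + 2}
      = inj_on s {..<2 * h + 2}"
    unfolding s_def by (intro inj_on_cong) (use sigma_even_coloring[OF assms] in simp)
  ultimately show ?thesis
    by simp
qed

lemma even_coloring_qm_nsd:
  fixes h :: nat
  defines "K \<equiv> complete_graph (2 * h + 2)"
  assumes "h \<ge> 1"
  shows "is_k_edge_coloring 3 K (even_coloring h) \<and> quasi_majority K (even_coloring h)
    \<and> nsd K (even_coloring h)"
proof (intro conjI)
  show "is_k_edge_coloring 3 K (even_coloring h)"
    by (simp add: is_k_edge_coloring_def even_coloring_def odd_coloring_def apex_color_def
        sum_color_def)
  show "quasi_majority K (even_coloring h)"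
    unfolding K_def
    by (rule quasi_majority_complete_graphI) (use card_even_coloring_row_le[OF assms(2)] in simp)
  show "nsd K (even_coloring h)"
    unfolding K_def nsd_complete_graph_iff using assms(2) by (rule inj_on_sigma_even_coloring)
qed

lemma qm_nsd_3_coloring_complete_graph:
  assumes "n \<ge> 3"
  shows "\<exists>c. is_k_edge_coloring 3 (complete_graph n) c \<and> quasi_majority (complete_graph n) c
    \<and> nsd (complete_graph n) c"
proof (cases "even n")
  case True
  then obtain k where "n = 2 * k"
    by (elim evenE)
  with assms have "n = 2 * (k - 1) + 2" and "k - 1 \<ge> 1"
    by auto
  then show ?thesis
    using even_coloring_qm_nsd by blast
next
  case False
  then obtain h where "n = 2 * h + 1"
    by (elim oddE)
  then show ?thesis
    using odd_coloring_qm_nsd by blast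
qed

theorem mainTheorem4:
  fixes n :: nat
  assumes "n \<ge> 3"
  shows "chi_qm_sigma (complete_graph n) = 3"
  unfolding chi_qm_sigma_def
proof (rule Least_equality)
  show "\<exists>c. is_k_edge_coloring 3 (complete_graph n) c \<and> quasi_majority (complete_graph n) c
      \<and> nsd (complete_graph n) c"
    using assms by (rule qm_nsd_3_coloring_complete_graph)
  show "3 \<le> k" if "\<exists>c. is_k_edge_coloring k (complete_graph n) c
      \<and> quasi_majority (complete_graph n) c \<and> nsd (complete_graph n) c" for k
    using that three_le_qm_nsd_colors_complete_graph[OF assms] by blast
qed

end
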